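(* Let $n$ and $a$ be positive integers with $n \equiv 0 \pmod 4$, $a \equiv 0 \pmod 4$, $0 < a < n$, and such that $p = \frac{a}{4} + \frac{n}{4}$ is a prime number. Let $$\Sigma = \{x = (x_1,\dots,x_n) : x_i \in \{-1,1\} \text{ for all } i,\ x_1 = 1,\ x_1+\dots+x_n = 0\}.$$ If $Q \subset \Sigma$ satisfies $|Q| > \sum_{i=0}^{p-1}\binom{n}{i}$, then there exist $x, y \in Q$ with $(x,y) = -a$, where $(\cdot,\cdot)$ is the standard inner product on $\mathbb{R}^n$. *)

theory Defs
  imports Main "HOL-Computational_Algebra.Primes"
begin

text \<open>Vectors in R^n with coordinates x_1..x_n are represented as functions
  nat \<Rightarrow> int on indices 1..n, required to be 0 outside {1..n}.\<close>

definition Sigma_set :: "nat \<Rightarrow> (nat \<Rightarrow> int) set" where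
  "Sigma_set n = {x. (\<forall>i\<in>{1..n}. x i \<in> {-1, 1}) \<and> (\<forall>i. i \<notin> {1..n} \<longrightarrow> x i = 0)
                     \<and> x 1 = 1 \<and> (\<Sum>i=1..n. x i) = 0}"

definition inner_n :: "nat \<Rightarrow> (nat \<Rightarrow> int) \<Rightarrow> (nat \<Rightarrow> int) \<Rightarrow> int" where
  "inner_n n x y = (\<Sum>i=1..n. x i * y i)"

end

theory Submission
  imports Defs "Jordan_Normal_Form.Determinant"
begin

(* A Frankl-Wilson type bound via the determinant method modulo a prime.

   For x in Q let  f_x(z) = prod_{j=1}^{p-1} (<x,z> + a - j).  Since <x,x> + a = n + a = 4p,
   the number f_x(x) is not divisible by p; if x ~= y and <x,y> ~= -a, then <x,y> + a is a
   nonzero multiple of 4 of absolute value < 4p, hence not divisible by p, and so p divides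
   f_x(y).  Thus the integer matrix (f_x(y))_{x,y in Q} has a determinant that is nonzero
   modulo p.  On the other hand, on the cube {-1,1}^n every f_x is an integer combination of
   the multilinear monomials prod_{i in S} z_i with |S| <= p-1, so that matrix factors through
   a space of dimension sum_{i<p} (n choose i), and its determinant vanishes if |Q| exceeds it. *)

section \<open>A rank bound modulo a prime\<close>

lemma det_zero_row:
  fixes A :: "'a :: comm_ring_1 mat"
  assumes A: "A \<in> carrier_mat m m" and k: "k < m" and zero: "\<And>j. j < m \<Longrightarrow> A $$ (k, j) = 0"
  shows "det A = 0"
proof -
  have "signof \<pi> * (\<Prod>i = 0..<m. A $$ (i, \<pi> i)) = 0" if pi: "\<pi> permutes {0..<m}" for \<pi>
  proof -
    have "\<pi> k < m" using permutes_in_image[OF pi] k by simp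
    then have "A $$ (k, \<pi> k) = 0" by (rule zero)
    then show ?thesis using k by (simp add: prod_zero[of "{0..<m}"] bexI[of _ k])
  qed
  then show ?thesis by (simp add: det_def'[OF A])
qed

text \<open>If the off-diagonal entries of an integer matrix are divisible by a prime p and the
  diagonal ones are not, then the determinant is not divisible by p: modulo p only the
  identity permutation contributes to the Leibniz expansion.\<close>

lemma det_not_dvd_if_offdiag_dvd:
  fixes M :: "int mat"
  assumes M: "M \<in> carrier_mat m m" and p: "prime p"
    and diag: "\<And>i. i < m \<Longrightarrow> \<not> p dvd M $$ (i, i)"
    and off: "\<And>i j. i < m \<Longrightarrow> j < m \<Longrightarrow> i \<noteq> j \<Longrightarrow> p dvd M $$ (i, j)"
  shows "\<not> p dvd det M"
proof
  assume dvd_det: "p dvd det M"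
  let ?P = "{\<pi>. \<pi> permutes {0..<m}}"
  let ?t = "\<lambda>\<pi>. signof \<pi> * (\<Prod>i = 0..<m. M $$ (i, \<pi> i))"
  have fin: "finite ?P" and id: "id \<in> ?P" by (simp_all add: finite_permutations permutes_id)
  have split: "det M = ?t id + (\<Sum>\<pi>\<in>?P - {id}. ?t \<pi>)"
    using det_def'[OF M] sum.remove[OF fin id, of ?t] by simp
  have "p dvd ?t \<pi>" if "\<pi> \<in> ?P - {id}" for \<pi>
  proof -
    have perm: "\<pi> permutes {0..<m}" and "\<pi> \<noteq> id" using that by auto
    then obtain i where moved: "\<pi> i \<noteq> i" by (auto simp: fun_eq_iff)
    have i: "i < m" using moved permutes_not_in[OF perm] by fastforce
    then have "\<pi> i < m" using permutes_in_image[OF perm] by simp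
    then have "p dvd M $$ (i, \<pi> i)" using off i moved by simp
    also have "\<dots> dvd (\<Prod>i = 0..<m. M $$ (i, \<pi> i))" using i by (intro dvd_prodI) auto
    finally show ?thesis by simp
  qed
  then have "p dvd (\<Sum>\<pi>\<in>?P - {id}. ?t \<pi>)" by (rule dvd_sum)
  then have "p dvd (\<Prod>i = 0..<m. M $$ (i, i))"
    using dvd_det split by (simp add: dvd_add_left_iff sign_id)
  then obtain i where "i < m" "p dvd M $$ (i, i)" using p by (auto simp: prime_dvd_prod_iff)
  then show False using diag by blast
qed

lemma card_le_card_basis_mod_prime:
  fixes Q :: "'a set" and B :: "'b set" and p :: int
    and f :: "'a \<Rightarrow> 'a \<Rightarrow> int" and C :: "'a \<Rightarrow> 'b \<Rightarrow> int" and g :: "'b \<Rightarrow> 'a \<Rightarrow> int"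
  assumes "finite Q" "finite B" and p: "prime p"
    and repr: "\<And>x y. x \<in> Q \<Longrightarrow> y \<in> Q \<Longrightarrow> f x y = (\<Sum>S\<in>B. C x S * g S y)"
    and diag: "\<And>x. x \<in> Q \<Longrightarrow> \<not> p dvd f x x"
    and off: "\<And>x y. x \<in> Q \<Longrightarrow> y \<in> Q \<Longrightarrow> x \<noteq> y \<Longrightarrow> p dvd f x y"
  shows "card Q \<le> card B"
proof (rule ccontr)
  define m where "m = card Q"
  define N where "N = card B"
  assume "\<not> card Q \<le> card B"
  then have Nm: "N < m" by (simp add: m_def N_def)
  obtain q where q: "bij_betw q {0..<m} Q" using ex_bij_betw_nat_finite[OF \<open>finite Q\<close>] m_def by blast
  obtain s where s: "bij_betw s {0..<N} B" using ex_bij_betw_nat_finite[OF \<open>finite B\<close>] N_def by blast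
  have qQ: "q i \<in> Q" if "i < m" for i using q that by (auto dest: bij_betw_apply)
  \<comment> \<open>The factorization (f x y) = (C x S) * (g S y) through B, padded with zeros to m x m.\<close>
  define MA where "MA = mat m m (\<lambda>(i, k). if k < N then C (q i) (s k) else 0)"
  define MB where "MB = mat m m (\<lambda>(k, j). if k < N then g (s k) (q j) else 0)"
  define MM where "MM = mat m m (\<lambda>(i, j). f (q i) (q j))"
  have carriers: "MA \<in> carrier_mat m m" "MB \<in> carrier_mat m m" "MM \<in> carrier_mat m m"
    unfolding MA_def MB_def MM_def by auto
  have "MA * MB = MM"
  proof (rule eq_matI)
    fix i j assume "i < dim_row MM" "j < dim_col MM"
    then have ij: "i < m" "j < m" unfolding MM_def by auto
    have "(MA * MB) $$ (i, j) = (\<Sum>k\<in>{0..<N}. C (q i) (s k) * g (s k) (q j))"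
      using ij Nm unfolding MA_def MB_def
      by (simp add: scalar_prod_def, intro sum.mono_neutral_cong_right) auto
    also have "\<dots> = (\<Sum>S\<in>B. C (q i) S * g S (q j))"
      by (rule sum.reindex_bij_betw[OF s])
    also have "\<dots> = MM $$ (i, j)" using ij repr[OF qQ qQ] unfolding MM_def by simp
    finally show "(MA * MB) $$ (i, j) = MM $$ (i, j)" .
  qed (simp_all add: MA_def MB_def MM_def)
  moreover have "det MB = 0"
    by (rule det_zero_row[OF carriers(2), of "m - 1"]) (use Nm in \<open>auto simp: MB_def\<close>)
  ultimately have "det MM = 0" using det_mult[OF carriers(1,2)] by simp
  moreover have "\<not> p dvd det MM"
  proof (rule det_not_dvd_if_offdiag_dvd[OF carriers(3) p])
    show "\<not> p dvd MM $$ (i, i)" if "i < m" for i using diag[OF qQ] that by (simp add: MM_def)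
    show "p dvd MM $$ (i, j)" if "i < m" "j < m" "i \<noteq> j" for i j
    proof -
      have "q i \<noteq> q j" using that bij_betw_imp_inj_on[OF q] by (auto simp: inj_on_def)
      then show ?thesis using off[OF qQ qQ] that by (simp add: MM_def)
    qed
  qed
  ultimately show False by simp
qed

section \<open>Multilinear functions of low degree on the cube\<close>

definition cube :: "nat \<Rightarrow> (nat \<Rightarrow> int) set" where
  "cube n = {z. \<forall>i\<in>{1..n}. z i \<in> {-1, 1}}"

definition small_subsets :: "nat \<Rightarrow> nat \<Rightarrow> nat set set" where
  "small_subsets n d = {S. S \<subseteq> {1..n} \<and> card S \<le> d}"

definition monomial :: "nat set \<Rightarrow> (nat \<Rightarrow> int) \<Rightarrow> int" where
  "monomial S z = (\<Prod>i\<in>S. z i)"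

definition low_degree :: "nat \<Rightarrow> nat \<Rightarrow> ((nat \<Rightarrow> int) \<Rightarrow> int) \<Rightarrow> bool" where
  "low_degree n d g \<longleftrightarrow>
     (\<exists>c. \<forall>z\<in>cube n. g z = (\<Sum>S\<in>small_subsets n d. c S * monomial S z))"

lemma finite_small_subsets: "finite (small_subsets n d)"
  by (rule finite_subset[of _ "Pow {1..n}"]) (auto simp: small_subsets_def)

lemma card_small_subsets: "card (small_subsets n d) = (\<Sum>i=0..d. n choose i)"
proof -
  have layers: "small_subsets n d = (\<Union>i\<in>{0..d}. {S. S \<subseteq> {1..n} \<and> card S = i})"
    unfolding small_subsets_def by auto
  have "card (\<Union>i\<in>{0..d}. {S. S \<subseteq> {1..n} \<and> card S = i})
        = (\<Sum>i=0..d. card {S. S \<subseteq> {1..n} \<and> card S = i})"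
    by (rule card_UN_disjoint) (auto intro: finite_subset[of _ "Pow {1..n}"])
  then show ?thesis by (simp add: layers n_subsets)
qed

lemma low_degree_cong:
  "(\<And>z. z \<in> cube n \<Longrightarrow> g z = h z) \<Longrightarrow> low_degree n d g \<Longrightarrow> low_degree n d h"
  unfolding low_degree_def by metis

lemma low_degree_mono:
  assumes "d \<le> e" "low_degree n d g" shows "low_degree n e g"
proof -
  obtain c where c: "\<forall>z\<in>cube n. g z = (\<Sum>S\<in>small_subsets n d. c S * monomial S z)"
    using assms(2) low_degree_def by blast
  define c' where "c' S = (if S \<in> small_subsets n d then c S else 0)" for S
  have sub: "small_subsets n d \<subseteq> small_subsets n e" using assms(1) by (auto simp: small_subsets_def)
  have "(\<Sum>S\<in>small_subsets n e. c' S * monomial S z) = (\<Sum>S\<in>small_subsets n d. c S * monomial S z)" for z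
    by (rule sum.mono_neutral_cong_right) (use sub finite_small_subsets in \<open>auto simp: c'_def\<close>)
  then show ?thesis using c unfolding low_degree_def by metis
qed

lemma low_degree_add:
  assumes "low_degree n d g" "low_degree n d h" shows "low_degree n d (\<lambda>z. g z + h z)"
proof -
  obtain c c' where
    "\<forall>z\<in>cube n. g z = (\<Sum>S\<in>small_subsets n d. c S * monomial S z)"
    "\<forall>z\<in>cube n. h z = (\<Sum>S\<in>small_subsets n d. c' S * monomial S z)"
    using assms low_degree_def by metis
  then have "\<forall>z\<in>cube n. g z + h z = (\<Sum>S\<in>small_subsets n d. (c S + c' S) * monomial S z)"
    by (simp add: distrib_right sum.distrib)
  then show ?thesis unfolding low_degree_def by (intro exI[of _ "\<lambda>S. c S + c' S"])
qed

lemma low_degree_smult: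
  assumes "low_degree n d g" shows "low_degree n d (\<lambda>z. k * g z)"
proof -
  obtain c where "\<forall>z\<in>cube n. g z = (\<Sum>S\<in>small_subsets n d. c S * monomial S z)"
    using assms low_degree_def by blast
  then have "\<forall>z\<in>cube n. k * g z = (\<Sum>S\<in>small_subsets n d. (k * c S) * monomial S z)"
    by (simp add: sum_distrib_left mult.assoc)
  then show ?thesis unfolding low_degree_def by (intro exI[of _ "\<lambda>S. k * c S"])
qed

lemma low_degree_sum:
  assumes "finite I" "\<And>i. i \<in> I \<Longrightarrow> low_degree n d (g i)"
  shows "low_degree n d (\<lambda>z. \<Sum>i\<in>I. g i z)"
  using assms
proof (induction I rule: finite_induct)
  case empty
  have "low_degree n d (\<lambda>z. 0)" unfolding low_degree_def by (rule exI[of _ "\<lambda>S. 0"]) simp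
  then show ?case by simp
next
  case (insert x F)
  then show ?case by (simp add: low_degree_add)
qed

lemma low_degree_monomial:
  assumes "T \<in> small_subsets n d" shows "low_degree n d (monomial T)"
proof -
  have "(\<Sum>S\<in>small_subsets n d. (if S = T then 1 else 0) * monomial S z)
        = (\<Sum>S\<in>small_subsets n d. if S = T then monomial S z else 0)" for z
    by (rule sum.cong) auto
  then have "\<forall>z\<in>cube n. monomial T z = (\<Sum>S\<in>small_subsets n d. (if S = T then 1 else 0) * monomial S z)"
    using assms finite_small_subsets by simp
  then show ?thesis unfolding low_degree_def by (intro exI[of _ "\<lambda>S. if S = T then 1 else 0"])
qed

text \<open>On the cube z_i^2 = 1, so multiplying a monomial by z_i toggles i in its index set.\<close>

lemma monomial_times_coordinate:
  assumes z: "z \<in> cube n" and i: "i \<in> {1..n}" and S: "S \<subseteq> {1..n}"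
  shows "monomial S z * z i = monomial (if i \<in> S then S - {i} else insert i S) z"
proof -
  have fS: "finite S" using S finite_subset by blast
  have "z i = -1 \<or> z i = 1" using z i unfolding cube_def by auto
  then have "z i * z i = 1" by auto
  then show ?thesis using fS
    by (cases "i \<in> S") (simp_all add: monomial_def prod.remove mult_ac)
qed

lemma low_degree_times_coordinate:
  assumes g: "low_degree n d g" and i: "i \<in> {1..n}"
  shows "low_degree n (Suc d) (\<lambda>z. g z * z i)"
proof -
  obtain c where c: "\<forall>z\<in>cube n. g z = (\<Sum>S\<in>small_subsets n d. c S * monomial S z)"
    using g low_degree_def by blast
  define T where "T S = (if i \<in> S then S - {i} else insert i S)" for S
  have T_small: "T S \<in> small_subsets n (Suc d)" if "S \<in> small_subsets n d" for S
  proof -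
    have S: "S \<subseteq> {1..n}" "card S \<le> d" using that by (auto simp: small_subsets_def)
    then have "finite S" using finite_subset by blast
    then have "card (T S) \<le> Suc (card S)"
      by (auto simp: T_def card_insert_if card_Diff_singleton_if)
    then show ?thesis using S i by (auto simp: T_def small_subsets_def)
  qed
  have combination: "low_degree n (Suc d) (\<lambda>z. \<Sum>S\<in>small_subsets n d. c S * monomial (T S) z)"
    by (intro low_degree_sum finite_small_subsets low_degree_smult low_degree_monomial T_small)
  have "g z * z i = (\<Sum>S\<in>small_subsets n d. c S * monomial (T S) z)" if z: "z \<in> cube n" for z
  proof -
    have "g z * z i = (\<Sum>S\<in>small_subsets n d. c S * (monomial S z * z i))"
      using c z by (simp add: sum_distrib_right mult.assoc)
    also have "\<dots> = (\<Sum>S\<in>small_subsets n d. c S * monomial (T S) z)"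
      by (rule sum.cong) (auto simp: T_def small_subsets_def monomial_times_coordinate[OF z i])
    finally show ?thesis .
  qed
  then show ?thesis using low_degree_cong[OF _ combination] by simp
qed

lemma low_degree_times_inner:
  assumes "low_degree n d g" shows "low_degree n (Suc d) (\<lambda>z. g z * inner_n n x z)"
proof -
  have "low_degree n (Suc d) (\<lambda>z. \<Sum>i\<in>{1..n}. x i * (g z * z i))"
    by (intro low_degree_sum low_degree_smult low_degree_times_coordinate assms) auto
  then show ?thesis
    by (rule low_degree_cong[rotated]) (simp add: inner_n_def sum_distrib_left mult_ac)
qed

lemma low_degree_inner_product:
  "low_degree n k (\<lambda>z. \<Prod>j\<in>{1..k}. inner_n n x z + b - int j)"
proof (induction k)
  case 0
  have "low_degree n 0 (monomial {})" by (rule low_degree_monomial) (simp add: small_subsets_def)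
  then show ?case by (rule low_degree_cong[rotated]) (simp add: monomial_def)
next
  case (Suc k)
  let ?g = "\<lambda>z. \<Prod>j\<in>{1..k}. inner_n n x z + b - int j"
  have "low_degree n (Suc k) (\<lambda>z. ?g z * inner_n n x z + (b - int (Suc k)) * ?g z)"
    by (intro low_degree_add low_degree_times_inner Suc.IH
        low_degree_mono[OF _ low_degree_smult[OF Suc.IH]]) simp
  then show ?case
    by (rule low_degree_cong[rotated]) (simp add: prod.cl_ivl_Suc algebra_simps)
qed

section \<open>Inner products of balanced sign vectors\<close>

lemma Sigma_set_sign: "x \<in> Sigma_set n \<Longrightarrow> i \<in> {1..n} \<Longrightarrow> x i = -1 \<or> x i = 1"
  unfolding Sigma_set_def by auto

lemma Sigma_set_cube: "x \<in> Sigma_set n \<Longrightarrow> x \<in> cube n"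
  unfolding Sigma_set_def cube_def by auto

lemma inner_self: assumes "x \<in> Sigma_set n" shows "inner_n n x x = int n"
proof -
  have "inner_n n x x = (\<Sum>i=1..n. 1)"
    unfolding inner_n_def by (rule sum.cong) (use Sigma_set_sign[OF assms] in force)+
  then show ?thesis by simp
qed

text \<open>For balanced sign vectors, (x, y) + n = sum of (1 + x_i)(1 + y_i), a sum of multiples
  of 4.\<close>

lemma inner_plus_dim_dvd4:
  assumes x: "x \<in> Sigma_set n" and y: "y \<in> Sigma_set n"
  shows "4 dvd inner_n n x y + int n"
proof -
  have "(\<Sum>i=1..n. x i) = 0" "(\<Sum>i=1..n. y i) = 0" using x y unfolding Sigma_set_def by auto
  then have "inner_n n x y + int n = (\<Sum>i=1..n. (1 + x i) * (1 + y i))"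
    by (simp add: inner_n_def algebra_simps sum.distrib)
  also have "4 dvd \<dots>"
    by (rule dvd_sum) (use Sigma_set_sign[OF x] Sigma_set_sign[OF y] in fastforce)
  finally show ?thesis .
qed

text \<open>Both vectors start with 1, so (x, y) \<ge> 2 - n.\<close>

lemma inner_lower:
  assumes x: "x \<in> Sigma_set n" and y: "y \<in> Sigma_set n" and n: "1 \<le> n"
  shows "2 \<le> inner_n n x y + int n"
proof -
  have "x 1 * y 1 + 1 \<le> (\<Sum>i=1..n. x i * y i + 1)"
    by (rule member_le_sum) (use n Sigma_set_sign[OF x] Sigma_set_sign[OF y] in force)+
  moreover have "x 1 = 1" "y 1 = 1" using x y unfolding Sigma_set_def by auto
  ultimately show ?thesis by (simp add: sum.distrib inner_n_def)
qed

text \<open>Distinct vectors differ in some coordinate, so (x, y) \<le> n - 2.\<close>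

lemma inner_upper:
  assumes x: "x \<in> Sigma_set n" and y: "y \<in> Sigma_set n" and ne: "x \<noteq> y"
  shows "inner_n n x y + 2 \<le> int n"
proof -
  obtain i where i: "x i \<noteq> y i" using ne by auto
  then have i1: "i \<in> {1..n}" using x y unfolding Sigma_set_def by fastforce
  have "1 - x i * y i \<le> (\<Sum>j=1..n. 1 - x j * y j)"
    by (rule member_le_sum) (use i1 Sigma_set_sign[OF x] Sigma_set_sign[OF y] in force)+
  moreover have "1 - x i * y i = 2" using Sigma_set_sign[OF x i1] Sigma_set_sign[OF y i1] i by auto
  ultimately show ?thesis by (simp add: sum_subtractf inner_n_def)
qed

text \<open>The arithmetic heart of the argument: with 4p = n + a, the number (x, y) + a is a
  multiple of 4 strictly between -4p and 4p, so it is divisible by p only if it is 0.\<close>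

lemma inner_plus_a_not_dvd:
  fixes n a p :: nat
  assumes "0 < a" "a < n" "4 dvd n" "4 dvd a" "4 * p = n + a" "prime p"
    and x: "x \<in> Sigma_set n" and y: "y \<in> Sigma_set n" and "x \<noteq> y"
    and ne: "inner_n n x y \<noteq> - int a"
  shows "\<not> int p dvd inner_n n x y + int a"
proof
  assume p_dvd: "int p dvd inner_n n x y + int a"
  have "4 dvd (inner_n n x y + int n) - int n + int a"
    using inner_plus_dim_dvd4[OF x y] assms(3,4) by presburger
  then obtain t where t: "inner_n n x y + int a = 4 * t" by auto
  have "t \<noteq> 0" using t ne by auto
  moreover have "\<bar>t\<bar> < int p"
    using inner_lower[OF x y] inner_upper[OF x y \<open>x \<noteq> y\<close>] t assms(1,2,5) by linarith
  moreover have "\<not> int p dvd 4"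
  proof
    assume "int p dvd 4"
    then have "p dvd 4" by presburger
    have "p dvd 2 ^ 2" using \<open>p dvd 4\<close> by simp
    then have "p dvd 2" using prime_dvd_power \<open>prime p\<close> by blast
    then have "p \<le> 2" by (simp add: dvd_imp_le)
    moreover have "3 \<le> p" using assms(1-5) by presburger
    ultimately show False by simp
  qed
  ultimately show False using p_dvd t \<open>prime p\<close>
    by (auto simp: prime_dvd_mult_iff dest: dvd_imp_le_int)
qed

text \<open>For a prime p, p divides (t - 1)(t - 2)...(t - (p - 1)) if and only if p does not
  divide t: the factors run through all nonzero residues once.\<close>

lemma prime_dvd_falling_product_iff:
  fixes p :: nat and t :: int
  assumes p: "prime p"
  shows "int p dvd (\<Prod>j\<in>{1..p-1}. t - int j) \<longleftrightarrow> \<not> int p dvd t"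
proof
  assume "int p dvd (\<Prod>j\<in>{1..p-1}. t - int j)"
  then obtain j where j: "j \<in> {1..p-1}" "int p dvd t - int j"
    using p by (auto simp: prime_dvd_prod_iff)
  show "\<not> int p dvd t"
  proof
    assume "int p dvd t"
    then have "p dvd j" using j(2) by (metis dvd_diff_right_iff int_dvd_int_iff)
    then show False using j(1) by (auto dest: dvd_imp_le)
  qed
next
  assume "\<not> int p dvd t"
  define r where "r = t mod int p"
  have "r \<noteq> 0" "0 \<le> r" "r < int p"
    using \<open>\<not> int p dvd t\<close> prime_gt_0_nat[OF p] by (auto simp: r_def dvd_eq_mod_eq_0)
  then have r: "nat r \<in> {1..p-1}" by auto
  have "int p dvd t - int (nat r)" using \<open>0 \<le> r\<close> by (simp add: r_def mod_0_imp_dvd mod_diff_left_eq)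
  also have "\<dots> dvd (\<Prod>j\<in>{1..p-1}. t - int j)" by (rule dvd_prodI[OF _ r]) simp
  finally show "int p dvd (\<Prod>j\<in>{1..p-1}. t - int j)" .
qed

theorem mainTheorem5:
  fixes n a p :: nat and Q :: "(nat \<Rightarrow> int) set"
  assumes "0 < a" and "a < n"
    and "4 dvd n" and "4 dvd a"
    and "p = a div 4 + n div 4"
    and "prime p"
    and "Q \<subseteq> Sigma_set n"
    and "card Q > (\<Sum>i=0..p-1. n choose i)"
  shows "\<exists>x\<in>Q. \<exists>y\<in>Q. inner_n n x y = - int a"
proof (rule ccontr)
  assume no_pair: "\<not> ?thesis"
  have "finite Q" using assms(8) card.infinite by fastforce
  have four_p: "4 * p = n + a" using assms(3-5) by presburger
  define f where "f x z = (\<Prod>j\<in>{1..p-1}. inner_n n x z + int a - int j)" for x z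
  have "\<forall>x\<in>Q. \<exists>c. \<forall>z\<in>cube n. f x z = (\<Sum>S\<in>small_subsets n (p-1). c S * monomial S z)"
    using low_degree_inner_product unfolding f_def low_degree_def by blast
  then obtain C where C: "\<And>x z. x \<in> Q \<Longrightarrow> z \<in> cube n
      \<Longrightarrow> f x z = (\<Sum>S\<in>small_subsets n (p-1). C x S * monomial S z)"
    by metis
  have "card Q \<le> card (small_subsets n (p-1))"
  proof (rule card_le_card_basis_mod_prime[OF \<open>finite Q\<close> finite_small_subsets])
    show "prime (int p)" using assms(6) by simp
    show "f x y = (\<Sum>S\<in>small_subsets n (p-1). C x S * monomial S y)" if "x \<in> Q" "y \<in> Q" for x y
      using C that assms(7) Sigma_set_cube by blast
    show "\<not> int p dvd f x x" if "x \<in> Q" for x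
    proof -
      have "inner_n n x x + int a = int p * 4" using inner_self[of x n] that assms(7) four_p by auto
      then show ?thesis unfolding f_def prime_dvd_falling_product_iff[OF assms(6)] by simp
    qed
    show "int p dvd f x y" if "x \<in> Q" "y \<in> Q" "x \<noteq> y" for x y
      unfolding f_def prime_dvd_falling_product_iff[OF assms(6)]
      using inner_plus_a_not_dvd[OF assms(1-4) four_p assms(6)] that assms(7) no_pair by blast
  qed
  then show False using assms(8) by (simp add: card_small_subsets)
qed

end
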